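(* Let $p\in[1,\infty)$. If $\lim_{|x|\to\infty}\int_{-\infty}^{\infty}G(x,t)\,dt=0$, then $$\lim_{N\to\infty}\ \sup_{\|f\|_p\le1}\int_{|x|\ge N}|(Gf)(x)|^p\,dx=0,$$ the supremum being over $f\in L_p(\mathbb R)$ with $\|f\|_p\le 1$.
   Context: Let $q:\mathbb R\to\mathbb R$ be measurable with $q\in L_1^{\mathrm{loc}}(\mathbb R)$ and $q(x)\ge1$ a.e. A principal fundamental system of solutions (PFSS) of $z''=q(x)z$ is a pair $u,v$ of solutions ($C^1$, derivative locally absolutely continuous, equation a.e.) such that for all $x$: $u>0$, $v>0$, $u'<0$, $v'>0$, $v'u-u'v=1$, $u(x)=v(x)\int_x^\infty v(t)^{-2}dt$, and $u,u'\to0$ as $x\to\infty$, $v,v'\to0$ as $x\to-\infty$, $v,v'\to\infty$ as $x\to\infty$, $u,|u'|\to\infty$ as $x\to-\infty$. Fix a PFSS $\{u,v\}$. The Green function is $G(x,t)=u(x)v(t)$ for $x\ge t$ and $G(x,t)=u(t)v(x)$ for $x\le t$, and $(Gf)(x)=\int_{-\infty}^\infty G(x,t)f(t)\,dt$. *)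

theory Defs
  imports "HOL-Analysis.Analysis"
begin

definition admissible_coeff :: "(real \<Rightarrow> real) \<Rightarrow> bool" where
  "admissible_coeff q \<longleftrightarrow>
     q \<in> borel_measurable borel \<and>
     (\<forall>a b. set_integrable lborel {a..b} q) \<and>
     (AE x in lborel. q x \<ge> 1)"

text \<open>A (Caratheodory) solution of z'' = q z: z is differentiable everywhere and its derivative
  is locally absolutely continuous with derivative q z a.e., i.e. it is the indefinite
  integral of q z on every compact interval.\<close>
definition is_solution :: "(real \<Rightarrow> real) \<Rightarrow> (real \<Rightarrow> real) \<Rightarrow> bool" where
  "is_solution q z \<longleftrightarrow>
     (\<forall>x. z differentiable (at x)) \<and>
     (\<forall>a b. a \<le> b \<longrightarrow>
        set_integrable lborel {a..b} (\<lambda>t. q t * z t) \<and>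
        deriv z b - deriv z a = (LINT t:{a..b}|lborel. q t * z t))"

definition PFSS :: "(real \<Rightarrow> real) \<Rightarrow> (real \<Rightarrow> real) \<Rightarrow> (real \<Rightarrow> real) \<Rightarrow> bool" where
  "PFSS q u v \<longleftrightarrow>
     is_solution q u \<and> is_solution q v \<and>
     (\<forall>x. u x > 0 \<and> v x > 0 \<and> deriv u x < 0 \<and> deriv v x > 0 \<and>
          deriv v x * u x - deriv u x * v x = 1 \<and>
          set_integrable lborel {x..} (\<lambda>t. 1 / (v t)\<^sup>2) \<and>
          u x = v x * (LINT t:{x..}|lborel. 1 / (v t)\<^sup>2)) \<and>
     (u \<longlongrightarrow> 0) at_top \<and> (deriv u \<longlongrightarrow> 0) at_top \<and>
     (v \<longlongrightarrow> 0) at_bot \<and> (deriv v \<longlongrightarrow> 0) at_bot \<and>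
     filterlim v at_top at_top \<and> filterlim (deriv v) at_top at_top \<and>
     filterlim u at_top at_bot \<and> filterlim (\<lambda>x. \<bar>deriv u x\<bar>) at_top at_bot"

definition green :: "(real \<Rightarrow> real) \<Rightarrow> (real \<Rightarrow> real) \<Rightarrow> real \<Rightarrow> real \<Rightarrow> real" where
  "green u v x t = (if t \<le> x then u x * v t else u t * v x)"

definition green_op :: "(real \<Rightarrow> real) \<Rightarrow> (real \<Rightarrow> real) \<Rightarrow> (real \<Rightarrow> real) \<Rightarrow> real \<Rightarrow> real" where
  "green_op u v f x = (LINT t|lborel. green u v x t * f t)"

end

theory Submission
  imports Defs
begin

(*
  Only positivity and monotonicity of u and v (u decreasing, v increasing) are used.  Let m(x) be the mass of the kernel G(x,.).  Hoelder's
  inequality with weight G(x,.) gives |Gf(x)|^p <= m(x)^(p-1) * int G(x,t) |f(t)|^p dt.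
  Integrating over |x| >= N and exchanging the order of integration (Schur's test), it
  remains to bound the column masses int_{|x|>=N} G(x,t) dx.  Since G is symmetric and
  G(x,t) <= G(a,x) whenever a lies between t and x, the part over x >= N is at most
  m(max N t) and the part over x <= -N at most m(min (-N) t).  So if m <= delta on
  |x| >= N, the tail integral is at most 2 delta^p for every f in the unit ball of L_p.
*)

lemma Youngs_inequality_scaled:
  fixes p c s :: real
  assumes "p \<ge> 1" "c > 0" "s \<ge> 0"
  shows "s \<le> c powr (1 - p) * s powr p / p + (1 - 1 / p) * c"
proof (cases "s = 0")
  case True
  then show ?thesis using assms by (simp add: field_simps)
next
  case False
  have "(c powr (1 - p) * s powr p) powr (1 / p) * c powr (1 - 1 / p) = s"
    using assms False
    by (simp add: powr_mult powr_powr field_simps flip: powr_add)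
  moreover have "(c powr (1 - p) * s powr p) powr (1 / p) * c powr (1 - 1 / p)
      \<le> 1 / p * (c powr (1 - p) * s powr p) + (1 - 1 / p) * c"
    using assms False by (intro Youngs_inequality_0) (auto simp: field_simps)
  ultimately show ?thesis by simp
qed

lemma integral_weighted_powr_le:
  fixes g F :: "'a \<Rightarrow> real"
  assumes p: "p \<ge> 1"
    and g: "integrable M g" "\<And>t. 0 \<le> g t" and F: "\<And>t. 0 \<le> F t"
    and gF: "integrable M (\<lambda>t. g t * F t)" and gFp: "integrable M (\<lambda>t. g t * F t powr p)"
  shows "(\<integral>t. g t * F t \<partial>M) powr p \<le> (\<integral>t. g t \<partial>M) powr (p - 1) * (\<integral>t. g t * F t powr p \<partial>M)"
proof -
  define A where "A = (\<integral>t. g t * F t \<partial>M)"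
  define H where "H = (\<integral>t. g t \<partial>M)"
  define B where "B = (\<integral>t. g t * F t powr p \<partial>M)"
  have "0 \<le> A" "0 \<le> H" "0 \<le> B"
    unfolding A_def H_def B_def using g F by (auto intro!: integral_nonneg_AE)
  show ?thesis
  proof (cases "A = 0")
    case True
    then show ?thesis using p \<open>0 \<le> H\<close> \<open>0 \<le> B\<close> by (simp add: A_def H_def B_def)
  next
    case False
    have "H \<noteq> 0"
    proof
      assume "H = 0"
      then have "AE t in M. g t = 0"
        using integral_nonneg_eq_0_iff_AE[OF g(1)] g(2) by (simp add: H_def)
      then have "AE t in M. g t * F t = 0" by eventually_elim simp
      then show False using False by (simp add: A_def integral_eq_zero_AE)
    qed
    define c where "c = A / H"
    have "0 < c" using False \<open>0 \<le> A\<close> \<open>0 \<le> H\<close> \<open>H \<noteq> 0\<close> by (simp add: c_def)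
    \<comment> \<open>Young's inequality at the scale of the weighted mean \<open>c\<close>, integrated against \<open>g\<close>.\<close>
    have "A \<le> (\<integral>t. g t * (c powr (1 - p) * F t powr p / p + (1 - 1 / p) * c) \<partial>M)"
      unfolding A_def using gF gFp g F p \<open>0 < c\<close>
      by (intro integral_mono mult_left_mono Youngs_inequality_scaled)
         (auto simp: distrib_left mult.left_commute[of "g _"])
    also have "\<dots> = c powr (1 - p) * B / p + (1 - 1 / p) * (c * H)"
      using gFp g(1) by (simp add: B_def H_def distrib_left mult.left_commute[of "g _"])
    also have "c * H = A" using \<open>H \<noteq> 0\<close> by (simp add: c_def)
    finally have "A \<le> c powr (1 - p) * B" using p by (simp add: field_simps)
    then have "A * A powr (p - 1) \<le> c powr (1 - p) * B * A powr (p - 1)"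
      by (rule mult_right_mono) simp
    moreover have "c powr (1 - p) * A powr (p - 1) = H powr (p - 1)"
      using False \<open>0 \<le> A\<close> \<open>0 \<le> H\<close> \<open>H \<noteq> 0\<close>
      by (simp add: c_def powr_divide powr_minus_divide[of _ "p - 1", simplified])
    moreover have "A * A powr (p - 1) = A powr p"
      using False \<open>0 \<le> A\<close> powr_add[of A 1 "p - 1"] by simp
    ultimately have "A powr p \<le> H powr (p - 1) * B" by (metis mult.commute mult.assoc)
    then show ?thesis by (simp add: A_def H_def B_def)
  qed
qed

lemma powr_abs_integral_le_nn_integral:
  fixes g f :: "'a \<Rightarrow> real"
  assumes p: "p \<ge> 1" and "\<delta> > 0"
    and g: "g \<in> borel_measurable M" "\<And>t. 0 \<le> g t" and f: "f \<in> borel_measurable M"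
    and mass: "(\<integral>\<^sup>+t. ennreal (g t) \<partial>M) \<le> ennreal \<delta>"
  shows "ennreal (\<bar>\<integral>t. g t * f t \<partial>M\<bar> powr p)
    \<le> ennreal (\<delta> powr (p - 1)) * (\<integral>\<^sup>+t. ennreal (g t * \<bar>f t\<bar> powr p) \<partial>M)"
proof (cases "(\<integral>\<^sup>+t. ennreal (g t * \<bar>f t\<bar> powr p) \<partial>M) = \<infinity>")
  case True
  then show ?thesis using \<open>\<delta> > 0\<close> by (simp add: ennreal_mult_top)
next
  case False
  have int_g: "integrable M g"
    using g mass by (intro integrableI_nonneg) (auto simp: le_less_trans)
  have int_gfp: "integrable M (\<lambda>t. g t * \<bar>f t\<bar> powr p)"
    using g f False by (intro integrableI_nonneg) (auto simp: top.not_eq_extremum)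
  have int_gf: "integrable M (\<lambda>t. g t * \<bar>f t\<bar>)"
  proof (rule Bochner_Integration.integrable_bound[OF Bochner_Integration.integrable_add[OF int_g int_gfp]])
    show "(\<lambda>t. g t * \<bar>f t\<bar>) \<in> borel_measurable M" using g f by measurable
    have "\<bar>f t\<bar> \<le> 1 + \<bar>f t\<bar> powr p" for t
      using p powr_mono[of 1 p "\<bar>f t\<bar>"] powr_ge_zero[of "\<bar>f t\<bar>" p]
      by (cases "\<bar>f t\<bar> \<le> 1") (linarith, simp)
    then have "g t * \<bar>f t\<bar> \<le> g t + g t * \<bar>f t\<bar> powr p" for t
      using mult_left_mono g(2) by (metis distrib_left mult.right_neutral)
    then show "AE t in M. norm (g t * \<bar>f t\<bar>) \<le> norm (g t + g t * \<bar>f t\<bar> powr p)"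
      using g(2) by (simp add: abs_mult)
  qed
  have "(\<integral>t. g t \<partial>M) \<le> \<delta>"
    using mass g(2) \<open>\<delta> > 0\<close> by (simp add: nn_integral_eq_integral[OF int_g] ennreal_le_iff)
  have "\<bar>\<integral>t. g t * f t \<partial>M\<bar> \<le> (\<integral>t. g t * \<bar>f t\<bar> \<partial>M)"
    using integral_norm_bound[of M "\<lambda>t. g t * f t"] g(2) by (simp add: abs_mult)
  then have "\<bar>\<integral>t. g t * f t \<partial>M\<bar> powr p \<le> (\<integral>t. g t * \<bar>f t\<bar> \<partial>M) powr p"
    using p by (intro powr_mono2) auto
  also have "\<dots> \<le> (\<integral>t. g t \<partial>M) powr (p - 1) * (\<integral>t. g t * \<bar>f t\<bar> powr p \<partial>M)"
    using p int_g g(2) int_gf int_gfp by (intro integral_weighted_powr_le) auto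
  also have "\<dots> \<le> \<delta> powr (p - 1) * (\<integral>t. g t * \<bar>f t\<bar> powr p \<partial>M)"
    using p g(2) \<open>(\<integral>t. g t \<partial>M) \<le> \<delta>\<close>
    by (intro mult_right_mono powr_mono2 integral_nonneg_AE) auto
  finally show ?thesis
    using g(2) by (simp add: nn_integral_eq_integral[OF int_gfp] ennreal_leI flip: ennreal_mult)
qed

lemma nn_integral_powr_kernel_le:
  fixes k :: "'a \<Rightarrow> 'b \<Rightarrow> real" and f :: "'b \<Rightarrow> real"
  assumes "pair_sigma_finite M N" and p: "p \<ge> 1" and "\<delta> > 0"
    and k: "case_prod k \<in> borel_measurable (M \<Otimes>\<^sub>M N)" "\<And>x t. 0 \<le> k x t"
    and f: "f \<in> borel_measurable N" and S: "S \<in> sets M"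
    and rows: "\<And>x. x \<in> S \<Longrightarrow> (\<integral>\<^sup>+t. ennreal (k x t) \<partial>N) \<le> ennreal \<delta>"
    and columns: "\<And>t. t \<in> space N \<Longrightarrow> (\<integral>\<^sup>+x\<in>S. ennreal (k x t) \<partial>M) \<le> C"
  shows "(\<integral>\<^sup>+x\<in>S. ennreal (\<bar>\<integral>t. k x t * f t \<partial>N\<bar> powr p) \<partial>M)
    \<le> ennreal (\<delta> powr (p - 1)) * C * (\<integral>\<^sup>+t. ennreal (\<bar>f t\<bar> powr p) \<partial>N)"
proof -
  interpret pair_sigma_finite M N by fact
  define K where "K x t = ennreal (k x t * \<bar>f t\<bar> powr p) * indicator S x" for x t
  have K_meas: "case_prod K \<in> borel_measurable (M \<Otimes>\<^sub>M N)"
    unfolding K_def using k(1) f S by measurable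
  have "(\<integral>\<^sup>+x\<in>S. ennreal (\<bar>\<integral>t. k x t * f t \<partial>N\<bar> powr p) \<partial>M)
      \<le> (\<integral>\<^sup>+x. ennreal (\<delta> powr (p - 1)) * (\<integral>\<^sup>+t. K x t \<partial>N) \<partial>M)"
  proof (intro nn_integral_mono)
    fix x assume "x \<in> space M"
    then have "(\<lambda>t. k x t) \<in> borel_measurable N"
      using measurable_Pair2[OF k(1)] by simp
    then show "ennreal (\<bar>\<integral>t. k x t * f t \<partial>N\<bar> powr p) * indicator S x
        \<le> ennreal (\<delta> powr (p - 1)) * (\<integral>\<^sup>+t. K x t \<partial>N)"
      using p \<open>\<delta> > 0\<close> k(2) f rows
      by (cases "x \<in> S") (auto simp: K_def intro: powr_abs_integral_le_nn_integral)
  qed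
  also have "\<dots> = ennreal (\<delta> powr (p - 1)) * (\<integral>\<^sup>+t. (\<integral>\<^sup>+x. K x t \<partial>M) \<partial>N)"
    using K_meas by (simp add: nn_integral_cmult M2.borel_measurable_nn_integral Fubini')
  also have "\<dots> \<le> ennreal (\<delta> powr (p - 1)) * (\<integral>\<^sup>+t. ennreal (\<bar>f t\<bar> powr p) * C \<partial>N)"
  proof (intro mult_left_mono nn_integral_mono)
    fix t assume "t \<in> space N"
    have "(\<integral>\<^sup>+x. K x t \<partial>M) = ennreal (\<bar>f t\<bar> powr p) * (\<integral>\<^sup>+x\<in>S. ennreal (k x t) \<partial>M)"
      using k measurable_Pair1[OF k(1) \<open>t \<in> space N\<close>] S
      by (simp add: K_def ennreal_mult' mult_ac flip: nn_integral_cmult)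
    also have "\<dots> \<le> ennreal (\<bar>f t\<bar> powr p) * C"
      using \<open>t \<in> space N\<close> by (intro mult_left_mono columns) auto
    finally show "(\<integral>\<^sup>+x. K x t \<partial>M) \<le> ennreal (\<bar>f t\<bar> powr p) * C" .
  qed simp
  also have "\<dots> = ennreal (\<delta> powr (p - 1)) * C * (\<integral>\<^sup>+t. ennreal (\<bar>f t\<bar> powr p) \<partial>N)"
    using f by (subst nn_integral_multc) (auto simp: mult_ac)
  finally show ?thesis .
qed

lemma borel_measurable_antimono:
  fixes f :: "real \<Rightarrow> real"
  assumes "antimono f"
  shows "f \<in> borel_measurable borel"
proof -
  have "(\<lambda>x. - f x) \<in> borel_measurable borel"
    using assms by (intro borel_measurable_mono) (simp add: antimono_def mono_def)
  then show ?thesis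
    using borel_measurable_uminus by fastforce
qed

lemma PFSS_pos_monotone:
  assumes "PFSS q u v"
  shows "\<And>x. 0 < u x" "\<And>x. 0 < v x" "antimono u" "mono v"
proof -
  have "\<And>x. u differentiable at x" "\<And>x. v differentiable at x"
    and sign: "\<And>x. 0 < u x \<and> 0 < v x \<and> deriv u x < 0 \<and> deriv v x > 0"
    using assms unfolding PFSS_def is_solution_def by blast+
  then have "\<And>x. DERIV u x :> deriv u x" "\<And>x. DERIV v x :> deriv v x"
    by (simp_all add: DERIV_deriv_iff_real_differentiable)
  then show "antimono u" "mono v"
    using sign unfolding antimono_def mono_def
    by (metis DERIV_nonpos_imp_nonincreasing less_imp_le,
        metis DERIV_nonneg_imp_nondecreasing less_imp_le)
  show "\<And>x. 0 < u x" "\<And>x. 0 < v x" using sign by auto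
qed

lemma green_eq: "green u v x t = u (max x t) * v (min x t)"
  by (simp add: green_def max_def min_def)

context
  fixes u v :: "real \<Rightarrow> real"
  assumes u_nonneg: "\<And>x. 0 \<le> u x" and v_nonneg: "\<And>x. 0 \<le> v x"
    and u_antimono: "antimono u" and v_mono: "mono v"
begin

lemma green_nonneg: "0 \<le> green u v x t"
  by (simp add: green_eq u_nonneg v_nonneg)

lemma borel_measurable_uv [measurable]: "u \<in> borel_measurable borel" "v \<in> borel_measurable borel"
  using u_antimono v_mono by (simp_all add: borel_measurable_antimono borel_measurable_mono)

lemma borel_measurable_green: "case_prod (green u v) \<in> borel_measurable (lborel \<Otimes>\<^sub>M lborel)"
  unfolding green_eq by measurable

lemma green_le_green_max: "a \<le> x \<Longrightarrow> green u v x t \<le> green u v (max a t) x"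
  using u_nonneg v_nonneg monoD[OF v_mono, of t a]
  by (cases "a \<le> t") (auto simp: green_def max_def intro: mult_left_mono)

lemma green_le_green_min: "x \<le> a \<Longrightarrow> green u v x t \<le> green u v (min a t) x"
  using u_nonneg v_nonneg antimonoD[OF u_antimono, of a t]
  by (cases "t \<le> a") (auto simp: green_def min_def intro: mult_right_mono)

lemma nn_integral_green_tail_le:
  assumes "0 \<le> N"
    and rows: "\<And>s. N \<le> \<bar>s\<bar> \<Longrightarrow> (\<integral>\<^sup>+x. ennreal (green u v s x) \<partial>lborel) \<le> D"
  shows "(\<integral>\<^sup>+x\<in>{x. N \<le> \<bar>x\<bar>}. ennreal (green u v x t) \<partial>lborel) \<le> 2 * D"
proof -
  have right: "(\<integral>\<^sup>+x\<in>{N..}. ennreal (green u v x t) \<partial>lborel) \<le> D"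
  proof -
    have "(\<integral>\<^sup>+x\<in>{N..}. ennreal (green u v x t) \<partial>lborel)
        \<le> (\<integral>\<^sup>+x. ennreal (green u v (max N t) x) \<partial>lborel)"
      by (intro nn_integral_mono) (auto intro: ennreal_leI green_le_green_max split: split_indicator)
    also have "\<dots> \<le> D" using \<open>0 \<le> N\<close> by (intro rows) auto
    finally show ?thesis .
  qed
  have left: "(\<integral>\<^sup>+x\<in>{..-N}. ennreal (green u v x t) \<partial>lborel) \<le> D"
  proof -
    have "(\<integral>\<^sup>+x\<in>{..-N}. ennreal (green u v x t) \<partial>lborel)
        \<le> (\<integral>\<^sup>+x. ennreal (green u v (min (-N) t) x) \<partial>lborel)"
      by (intro nn_integral_mono) (auto intro: ennreal_leI green_le_green_min split: split_indicator)
    also have "\<dots> \<le> D" using \<open>0 \<le> N\<close> by (intro rows) auto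
    finally show ?thesis .
  qed
  have "(\<integral>\<^sup>+x\<in>{x. N \<le> \<bar>x\<bar>}. ennreal (green u v x t) \<partial>lborel)
      \<le> (\<integral>\<^sup>+x. ennreal (green u v x t) * indicator {N..} x
             + ennreal (green u v x t) * indicator {..-N} x \<partial>lborel)"
    by (intro nn_integral_mono) (auto split: split_indicator)
  also have "\<dots> = (\<integral>\<^sup>+x\<in>{N..}. ennreal (green u v x t) \<partial>lborel)
      + (\<integral>\<^sup>+x\<in>{..-N}. ennreal (green u v x t) \<partial>lborel)"
    unfolding green_eq by (intro nn_integral_add) auto
  also have "\<dots> \<le> 2 * D" using add_mono[OF right left] by (simp add: mult_2)
  finally show ?thesis .
qed

lemma green_op_tail_le:
  assumes p: "p \<ge> 1" and "\<delta> > 0" and "0 \<le> N"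
    and rows: "\<And>s. N \<le> \<bar>s\<bar> \<Longrightarrow> (\<integral>\<^sup>+t. ennreal (green u v s t) \<partial>lborel) \<le> ennreal \<delta>"
    and f: "f \<in> borel_measurable lborel" "(\<integral>\<^sup>+t. ennreal (\<bar>f t\<bar> powr p) \<partial>lborel) \<le> 1"
  shows "(\<integral>\<^sup>+x\<in>{x. \<bar>x\<bar> \<ge> N}. ennreal (\<bar>green_op u v f x\<bar> powr p) \<partial>lborel)
    \<le> ennreal (2 * \<delta> powr p)"
proof -
  have "(\<integral>\<^sup>+x\<in>{x. \<bar>x\<bar> \<ge> N}. ennreal (\<bar>green_op u v f x\<bar> powr p) \<partial>lborel)
      \<le> ennreal (\<delta> powr (p - 1)) * (2 * ennreal \<delta>) * (\<integral>\<^sup>+t. ennreal (\<bar>f t\<bar> powr p) \<partial>lborel)"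
    unfolding green_op_def
    using lborel_pair.pair_sigma_finite_axioms p \<open>\<delta> > 0\<close> borel_measurable_green green_nonneg f(1)
    by (intro nn_integral_powr_kernel_le rows nn_integral_green_tail_le[OF \<open>0 \<le> N\<close>]) auto
  also have "\<dots> \<le> ennreal (\<delta> powr (p - 1)) * (2 * ennreal \<delta>)"
    using mult_left_mono[OF f(2)] by simp
  also have "\<dots> = ennreal (2 * \<delta> powr p)"
    using \<open>\<delta> > 0\<close> powr_add[of \<delta> "p - 1" 1] by (simp add: ennreal_mult mult_ac)
  finally show ?thesis .
qed

end

theorem lemma5p4:
  fixes q u v :: "real \<Rightarrow> real" and p :: real
  assumes "admissible_coeff q"
    and "PFSS q u v"
    and "p \<ge> 1"
    and "((\<lambda>x. \<integral>\<^sup>+ t. ennreal (green u v x t) \<partial>lborel) \<longlongrightarrow> 0) at_infinity"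
  shows "((\<lambda>N::real. SUP f \<in> {f. f \<in> borel_measurable lborel \<and>
                          (\<integral>\<^sup>+ t. ennreal (\<bar>f t\<bar> powr p) \<partial>lborel) \<le> 1}.
             \<integral>\<^sup>+ x \<in> {x. \<bar>x\<bar> \<ge> N}. ennreal (\<bar>green_op u v f x\<bar> powr p) \<partial>lborel)
          \<longlongrightarrow> 0) at_top"
proof -
  define T where "T = (\<lambda>N. SUP f \<in> {f. f \<in> borel_measurable lborel \<and>
      (\<integral>\<^sup>+ t. ennreal (\<bar>f t\<bar> powr p) \<partial>lborel) \<le> 1}.
      \<integral>\<^sup>+ x \<in> {x. \<bar>x\<bar> \<ge> N}. ennreal (\<bar>green_op u v f x\<bar> powr p) \<partial>lborel)"
  note uv = PFSS_pos_monotone[OF assms(2)]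
  have "(T \<longlongrightarrow> 0) at_top"
  proof (rule tendsto_zero_ennreal)
    fix r :: real assume "0 < r"
    define \<delta> where "\<delta> = (r / 4) powr (1 / p)"
    have "0 < \<delta>" "2 * \<delta> powr p < r"
      using \<open>0 < r\<close> assms(3) by (simp_all add: \<delta>_def powr_powr)
    obtain R where R: "\<And>s. R \<le> \<bar>s\<bar> \<Longrightarrow> (\<integral>\<^sup>+t. ennreal (green u v s t) \<partial>lborel) < ennreal \<delta>"
      using order_tendstoD(2)[OF assms(4), of "ennreal \<delta>"] \<open>0 < \<delta>\<close>
      unfolding eventually_at_infinity by auto
    have "T N \<le> ennreal (2 * \<delta> powr p)" if "max R 0 \<le> N" for N
      unfolding T_def using that uv R assms(3) \<open>0 < \<delta>\<close>
      by (intro SUP_least green_op_tail_le[of u v]) (auto intro: less_imp_le)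
    moreover have "ennreal (2 * \<delta> powr p) < ennreal r"
      using \<open>0 < r\<close> \<open>2 * \<delta> powr p < r\<close> by (simp add: ennreal_lessI)
    ultimately show "\<forall>\<^sub>F N in at_top. T N < ennreal r"
      by (intro eventually_at_top_linorderI[of "max R 0"]) (auto intro: le_less_trans)
  qed
  then show ?thesis unfolding T_def .
qed

end
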